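(* Let $p:=\frac1{2\sqrt2}$ and $c:=\frac34$, and for $\alpha\in\mathbb R$, $q,C>0$, $n>0$ let $$X_{qC\alpha}(n):=\int_q^{+\infty}d\rho\,\rho^\alpha(1+\rho^2)^ne^{-n\frac{(\rho-q)^2}{C}}.$$ Then for fixed $\alpha\in\mathbb R$ and $n\to+\infty$, $$X_{pc\alpha}(n)=\frac{3\sqrt{\pi/5}}{2^{\alpha/2+1/2}}\,\frac{(3/2)^n}{e^{n/6}\sqrt n}\Big[1+O(\tfrac1n)\Big],\qquad X_{2p,2c,\alpha}(n)=3\sqrt{\pi/7}\,2^{\alpha/2}\,\frac{3^n}{e^{n/3}\sqrt n}\Big[1+O(\tfrac1n)\Big].$$ *)

theory Defs
  imports "HOL-Analysis.Analysis" "HOL-Library.Landau_Symbols"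
begin

definition Xint :: "real \<Rightarrow> real \<Rightarrow> real \<Rightarrow> real \<Rightarrow> real" where
  "Xint q C \<alpha> n = integral {q..}
     (\<lambda>\<rho>. \<rho> powr \<alpha> * (1 + \<rho>\<^sup>2) powr n * exp (- n * (\<rho> - q)\<^sup>2 / C))"

definition p_const :: real where "p_const = 1 / (2 * sqrt 2)"
definition c_const :: real where "c_const = 3 / 4"

end

theory Submission
  imports Defs "HOL-Probability.Distributions" "HOL-Real_Asymp.Real_Asymp"
begin

text \<open>Substituting \<rho> = (k + t) / sqrt 2, with k = 1 for (p, c) and k = 2 for (2 p, 2 c), turns X
  into exp (n (ln (1 + k^2 / 2) - k / 6)) times a Laplace integral of \<phi> t * exp (n * g t) over
  t \<ge> - k / 2, whose phase g has a nondegenerate maximum at t = 0: near 0,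
  g t = - a t^2 + b t^3 + O(t^4) and \<phi> t = A + c t + O(t^2), while g t \<le> - \<gamma> t^2 globally.
  On a fixed window around 0 the integrand differs from exp (- n a t^2) (A + c t + A n b t^3) by
  O(exp (- n a t^2 / 4) / n), which integrates to O(n^(-3/2)); the odd part c t + A n b t^3
  integrates to zero and the tails outside the window are exponentially small. Hence the integral
  is A sqrt (\<pi> / (a n)) (1 + O(1 / n)).\<close>

section \<open>Gaussian integrals\<close>

lemma exp_neg_square_eq_normal_density:
  fixes k x :: real
  assumes "0 < k"
  shows "exp (- (k * x\<^sup>2)) = sqrt (pi / k) * normal_density 0 (1 / sqrt (2 * k)) x"
proof -
  have "(1 / sqrt (2 * k))\<^sup>2 = 1 / (2 * k)"
    using assms by (simp add: power_divide)
  then show ?thesis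
    using assms pi_gt_zero unfolding normal_density_def
    by (simp add: field_simps real_sqrt_divide real_sqrt_mult)
qed

lemma integrable_exp_neg_square:
  fixes k :: real
  assumes "0 < k"
  shows "integrable lborel (\<lambda>x. exp (- (k * x\<^sup>2)))"
  unfolding exp_neg_square_eq_normal_density[OF assms]
  using assms by (intro integrable_mult_right integrable_normal_density) auto

lemma integral_exp_neg_square:
  fixes k :: real
  assumes "0 < k"
  shows "(\<integral>x. exp (- (k * x\<^sup>2)) \<partial>lborel) = sqrt (pi / k)"
  unfolding exp_neg_square_eq_normal_density[OF assms] using assms by simp

lemma lborel_integral_odd_eq_0:
  fixes f :: "real \<Rightarrow> real"
  assumes "\<And>x. f (- x) = - f x"
  shows "(\<integral>x. f x \<partial>lborel) = 0"
proof -
  have "(\<integral>x. f x \<partial>lborel) = \<bar>-1\<bar> *\<^sub>R (\<integral>x. f (0 + (-1) * x) \<partial>lborel)"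
    by (rule lborel_integral_real_affine) simp
  also have "\<dots> = - (\<integral>x. f x \<partial>lborel)"
    using assms by simp
  finally show ?thesis by simp
qed

lemma integral_odd_gaussian_window:
  fixes \<delta> k c d :: real
  shows "integrable lborel (\<lambda>t. indicator {-\<delta>..\<delta>} t * (exp (- (k * t\<^sup>2)) * (c * t + d * t ^ 3)))"
    and "(\<integral>t. indicator {-\<delta>..\<delta>} t * (exp (- (k * t\<^sup>2)) * (c * t + d * t ^ 3)) \<partial>lborel) = 0"
proof -
  have "integrable lborel (\<lambda>t. exp (- (k * t\<^sup>2)) * (c * t + d * t ^ 3) * indicator {-\<delta>..\<delta>} t)"
    by (intro borel_integrable_atLeastAtMost) simp
  then show "integrable lborel (\<lambda>t. indicator {-\<delta>..\<delta>} t * (exp (- (k * t\<^sup>2)) * (c * t + d * t ^ 3)))"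
    by (simp add: mult.commute)
  have "indicator {-\<delta>..\<delta>} (- t) = (indicator {-\<delta>..\<delta>} t :: real)" for t
    by (auto simp: indicator_def)
  then show "(\<integral>t. indicator {-\<delta>..\<delta>} t * (exp (- (k * t\<^sup>2)) * (c * t + d * t ^ 3)) \<partial>lborel) = 0"
    by (intro lborel_integral_odd_eq_0) (simp add: ring_distribs)
qed

lemma gaussian_truncation_error:
  fixes a \<delta> n :: real
  assumes "0 < a" "0 \<le> \<delta>" "1 \<le> n"
  shows "\<bar>(\<integral>t. indicator {-\<delta>..\<delta>} t * exp (- (n * a * t\<^sup>2)) \<partial>lborel) - sqrt (pi / (n * a))\<bar>
           \<le> sqrt (pi / a) * exp (- ((n - 1) * (a * \<delta>\<^sup>2)))"
proof -
  define G where "G t = exp (- (n * a * t\<^sup>2))" for t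
  define \<epsilon> where "\<epsilon> = exp (- ((n - 1) * (a * \<delta>\<^sup>2)))"
  have G: "integrable lborel G" "(\<integral>t. G t \<partial>lborel) = sqrt (pi / (n * a))"
    unfolding G_def using assms integrable_exp_neg_square[of "n * a"] integral_exp_neg_square[of "n * a"]
    by (simp_all add: mult.assoc)
  have G_window: "integrable lborel (\<lambda>t. indicator {-\<delta>..\<delta>} t * G t)"
    by (rule Bochner_Integration.integrable_bound[OF G(1)]) (auto simp: indicator_def G_def)
  have outside: "\<bar>(1 - indicator {-\<delta>..\<delta>} t) * G t\<bar> \<le> \<epsilon> * exp (- (a * t\<^sup>2))" for t
  proof (cases "\<bar>t\<bar> \<le> \<delta>")
    case False
    then have "\<delta>\<^sup>2 \<le> t\<^sup>2"
      using assms(2) abs_le_square_iff[of \<delta> t] by simp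
    then have "(n - 1) * (a * \<delta>\<^sup>2) \<le> (n - 1) * (a * t\<^sup>2)"
      using assms by (intro mult_left_mono) auto
    then have "G t \<le> \<epsilon> * exp (- (a * t\<^sup>2))"
      unfolding G_def \<epsilon>_def by (simp add: algebra_simps flip: exp_add)
    then show ?thesis
      using False by (simp add: indicator_def abs_le_iff G_def \<epsilon>_def)
  qed (simp add: indicator_def abs_le_iff \<epsilon>_def)
  have "\<bar>(\<integral>t. indicator {-\<delta>..\<delta>} t * G t \<partial>lborel) - sqrt (pi / (n * a))\<bar>
          = \<bar>\<integral>t. (1 - indicator {-\<delta>..\<delta>} t) * G t \<partial>lborel\<bar>"
    using G G_window by (simp add: left_diff_distrib)
  also have "\<dots> \<le> (\<integral>t. \<epsilon> * exp (- (a * t\<^sup>2)) \<partial>lborel)"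
    using G G_window integrable_exp_neg_square[OF assms(1)] outside
    by (intro integral_abs_bound_integral) (simp_all add: left_diff_distrib)
  also have "\<dots> = sqrt (pi / a) * \<epsilon>"
    using integral_exp_neg_square[OF assms(1)] by simp
  finally show ?thesis
    unfolding G_def \<epsilon>_def .
qed

lemma power_div_fact_le_exp:
  fixes y :: real
  assumes "0 \<le> y"
  shows "y ^ k / fact k \<le> exp y"
proof -
  have sums: "(\<lambda>m. y ^ m / fact m) sums exp y"
    using exp_converges[of y] by (simp add: divide_inverse mult.commute)
  have "(\<Sum>m\<in>{k}. y ^ m / fact m) \<le> (\<Sum>m. y ^ m / fact m)"
    using sums assms by (intro sum_le_suminf) (auto simp: sums_iff)
  then show ?thesis
    using sums by (simp add: sums_iff)
qed

lemma power_mult_exp_le: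
  fixes x a :: real
  assumes "0 \<le> x" "0 < a"
  shows "x ^ k * exp (- (a * x)) \<le> fact k / a ^ k"
proof -
  have "(a * x) ^ k / fact k \<le> exp (a * x)"
    using assms by (intro power_div_fact_le_exp) simp
  then show ?thesis
    using assms by (simp add: exp_minus power_mult_distrib field_simps)
qed

lemma abs_exp_minus_one_minus_le:
  fixes x :: real
  shows "\<bar>exp x - 1 - x\<bar> \<le> x\<^sup>2 * exp \<bar>x\<bar>"
proof -
  obtain t where t: "\<bar>t\<bar> \<le> \<bar>x\<bar>" "exp x = (\<Sum>m<2. x ^ m / fact m) + exp t / fact 2 * x ^ 2"
    using Maclaurin_exp_le[of x 2] by blast
  then have "\<bar>exp x - 1 - x\<bar> = exp t / 2 * x\<^sup>2"
    by (simp add: numeral_2_eq_2)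
  also have "\<dots> \<le> exp \<bar>x\<bar> * x\<^sup>2"
  proof (rule mult_right_mono)
    have "exp t \<le> exp \<bar>x\<bar>"
      using t(1) by simp
    then show "exp t / 2 \<le> exp \<bar>x\<bar>"
      using exp_gt_zero[of t] by linarith
  qed simp
  finally show ?thesis
    by (simp add: mult.commute)
qed

lemma abs_ln_one_plus_minus_cubic_le:
  fixes u :: real
  assumes u: "\<bar>u\<bar> \<le> 1/2"
  shows "\<bar>ln (1 + u) - (u - u\<^sup>2 / 2 + u ^ 3 / 3)\<bar> \<le> 2 * u ^ 4"
proof -
  define R where "R x = ln (1 + x) - (x - x\<^sup>2 / 2 + x ^ 3 / 3)" for x :: real
  have R_deriv: "DERIV R x :> - (x ^ 3) / (1 + x)" if "-1 < x" for x
    unfolding R_def using that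
    by (auto intro!: derivative_eq_intros simp: field_simps power2_eq_square power3_eq_cube)
  obtain z where z: "\<bar>z\<bar> \<le> \<bar>u\<bar>" "R u = u * (- (z ^ 3) / (1 + z))"
  proof (cases "0 \<le> u")
    case True
    show ?thesis
    proof (cases "u = 0")
      case False
      with True obtain z where "0 < z" "z < u" "R u - R 0 = (u - 0) * (- (z ^ 3) / (1 + z))"
        using MVT2[of 0 u R "\<lambda>x. - (x ^ 3) / (1 + x)"] R_deriv by force
      then show ?thesis
        using that[of z] by (simp add: R_def)
    qed (use that[of 0] in \<open>simp add: R_def\<close>)
  next
    case False
    then obtain z where "u < z" "z < 0" "R 0 - R u = (0 - u) * (- (z ^ 3) / (1 + z))"
      using MVT2[of u 0 R "\<lambda>x. - (x ^ 3) / (1 + x)"] R_deriv u by force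
    then show ?thesis
      using that[of z] by (simp add: R_def)
  qed
  have "1/2 \<le> 1 + z"
    using z(1) u by linarith
  then have "\<bar>z\<bar> ^ 3 / (1 + z) \<le> 2 * \<bar>z\<bar> ^ 3"
    by (simp add: divide_le_eq mult_left_mono[of "1/2" "1 + z" "2 * \<bar>z\<bar> ^ 3", simplified])
  also have "\<dots> \<le> 2 * \<bar>u\<bar> ^ 3"
    using z(1) by (simp add: power_mono)
  finally have "\<bar>u\<bar> * (\<bar>z\<bar> ^ 3 / (1 + z)) \<le> \<bar>u\<bar> * (2 * \<bar>u\<bar> ^ 3)"
    by (rule mult_left_mono) simp
  moreover have "\<bar>R u\<bar> = \<bar>u\<bar> * (\<bar>z\<bar> ^ 3 / (1 + z))"
    using z \<open>1/2 \<le> 1 + z\<close> by (simp add: abs_mult power_abs)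
  moreover have "\<bar>u\<bar> * (2 * \<bar>u\<bar> ^ 3) = 2 * u ^ 4"
    by (simp add: power_even_abs eval_nat_numeral)
  ultimately show ?thesis
    unfolding R_def by linarith
qed

lemma powr_le_two_powr_abs:
  fixes x e :: real
  assumes "1/2 \<le> x" "x \<le> 2"
  shows "x powr e \<le> 2 powr \<bar>e\<bar>"
proof -
  have "ln (1/2) \<le> ln x" "ln x \<le> ln 2"
    using assms by simp_all
  then have "\<bar>ln x\<bar> \<le> ln 2"
    by (simp add: ln_div)
  then have "\<bar>e\<bar> * \<bar>ln x\<bar> \<le> \<bar>e\<bar> * ln 2"
    by (rule mult_left_mono) simp
  then have "e * ln x \<le> \<bar>e\<bar> * ln 2"
    using abs_ge_self[of "e * ln x"] by (simp add: abs_mult)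
  then show ?thesis
    using assms by (simp add: powr_def)
qed

lemma one_plus_powr_taylor:
  fixes s \<alpha> :: real
  assumes s: "\<bar>s\<bar> \<le> 1/2"
  shows "\<bar>(1 + s) powr \<alpha> - 1 - \<alpha> * s\<bar> \<le> \<bar>\<alpha> * (\<alpha> - 1)\<bar> / 2 * 2 powr \<bar>\<alpha> - 2\<bar> * s\<^sup>2"
proof (cases "s = 0")
  case False
  define f where "f m = (if m = 0 then (\<lambda>s::real. (1 + s) powr \<alpha>)
      else if m = 1 then (\<lambda>s. \<alpha> * (1 + s) powr (\<alpha> - 1))
      else (\<lambda>s. \<alpha> * (\<alpha> - 1) * (1 + s) powr (\<alpha> - 2)))" for m :: nat
  have f_deriv: "DERIV (f m) t :> f (Suc m) t" if "m < 2" "-1/2 \<le> t" "t \<le> 1/2" for m t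
  proof -
    have "0 < 1 + t"
      using that by linarith
    then show ?thesis
      using that by (cases m) (auto simp: f_def algebra_simps intro!: derivative_eq_intros)
  qed
  obtain \<xi> where \<xi>: "if s < 0 then s < \<xi> \<and> \<xi> < 0 else 0 < \<xi> \<and> \<xi> < s"
    "f 0 s = (\<Sum>m<2. f m 0 / fact m * (s - 0) ^ m) + f 2 \<xi> / fact 2 * (s - 0) ^ 2"
    using Taylor[where n=2 and diff=f and f="f 0" and a="-1/2" and b="1/2" and c=0 and x=s]
      f_deriv s False by fastforce
  have "\<bar>\<xi>\<bar> \<le> 1/2"
    using \<xi>(1) s by (auto split: if_splits)
  then have "(1 + \<xi>) powr (\<alpha> - 2) \<le> 2 powr \<bar>\<alpha> - 2\<bar>"
    by (intro powr_le_two_powr_abs) auto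
  moreover have "\<bar>(1 + s) powr \<alpha> - 1 - \<alpha> * s\<bar> = \<bar>\<alpha> * (\<alpha> - 1)\<bar> / 2 * (1 + \<xi>) powr (\<alpha> - 2) * s\<^sup>2"
    using \<xi>(2) by (simp add: f_def numeral_2_eq_2 abs_mult)
  ultimately show ?thesis
    by (simp add: mult_left_mono mult_right_mono)
qed simp

lemma one_plus_powr_le_exp:
  fixes s \<alpha> :: real
  assumes s: "-1/2 \<le> s"
  shows "(1 + s) powr \<alpha> \<le> exp \<bar>\<alpha>\<bar> * exp (\<bar>\<alpha>\<bar> * \<bar>s\<bar>)"
proof -
  have "\<bar>ln (1 + s)\<bar> \<le> 1 + \<bar>s\<bar>"
  proof (cases "0 \<le> s")
    case True
    then show ?thesis
      using ln_add_one_self_le_self[of s] by simp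
  next
    case False
    have "ln (1/2) \<le> ln (1 + s)" "ln (1 + s) \<le> 0"
      using s False by simp_all
    then show ?thesis
      using ln_2_less_1 by (simp add: ln_div)
  qed
  then have "\<bar>\<alpha>\<bar> * \<bar>ln (1 + s)\<bar> \<le> \<bar>\<alpha>\<bar> * (1 + \<bar>s\<bar>)"
    by (rule mult_left_mono) simp
  then have "\<alpha> * ln (1 + s) \<le> \<bar>\<alpha>\<bar> * (1 + \<bar>s\<bar>)"
    using abs_ge_self[of "\<alpha> * ln (1 + s)"] by (simp add: abs_mult)
  then show ?thesis
    using s by (simp add: powr_def algebra_simps flip: exp_add)
qed

section \<open>The local error in Laplace's method\<close>

lemma abs_exp_remainder_le:
  fixes n w B t y :: real
  assumes w: "\<bar>w\<bar> \<le> B * \<bar>t\<bar> ^ 3" and y: "\<bar>n * w\<bar> \<le> y"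
  shows "\<bar>exp (n * w) - 1 - n * w\<bar> \<le> n\<^sup>2 * B\<^sup>2 * t ^ 6 * exp y"
proof -
  have "w\<^sup>2 \<le> B\<^sup>2 * t ^ 6"
    using power_mono[OF w abs_ge_zero, of 2]
    by (simp add: power_mult_distrib power_abs flip: power_mult)
  then have "n\<^sup>2 * w\<^sup>2 \<le> n\<^sup>2 * (B\<^sup>2 * t ^ 6)"
    by (rule mult_left_mono) simp
  then have "(n * w)\<^sup>2 \<le> n\<^sup>2 * B\<^sup>2 * t ^ 6"
    by (simp add: power_mult_distrib mult.assoc)
  moreover have "exp \<bar>n * w\<bar> \<le> exp y"
    using y by simp
  ultimately have "(n * w)\<^sup>2 * exp \<bar>n * w\<bar> \<le> n\<^sup>2 * B\<^sup>2 * t ^ 6 * exp y"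
    by (intro mult_mono) (auto intro: order_trans[OF zero_le_power2])
  then show ?thesis
    using abs_exp_minus_one_minus_le[of "n * w"] by linarith
qed

lemma exp_expansion_error:
  fixes n t v w A b c B M Mv P a :: real
  assumes n: "0 < n" and Mv: "0 \<le> Mv"
    and v: "\<bar>v - A - c * t\<bar> \<le> Mv * t\<^sup>2" "\<bar>v\<bar> \<le> P"
    and w: "\<bar>w - b * t ^ 3\<bar> \<le> M * t ^ 4" "\<bar>w\<bar> \<le> B * \<bar>t\<bar> ^ 3" "\<bar>w\<bar> \<le> a / 2 * t\<^sup>2"
  shows "\<bar>v * exp (n * w) - (A + c * t + A * n * b * t ^ 3)\<bar>
           \<le> Mv * t\<^sup>2 + (Mv * a / 2 + \<bar>A\<bar> * M + \<bar>c\<bar> * B) * (n * t ^ 4)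
              + P * B\<^sup>2 * (n\<^sup>2 * t ^ 6) * exp (n * a * t\<^sup>2 / 2)"
proof -
  define R where "R = exp (n * w) - 1 - n * w"
  have nw: "\<bar>n * w\<bar> \<le> n * a * t\<^sup>2 / 2"
    using w(3) n by (simp add: abs_mult mult_left_mono[of _ _ n, simplified])
  define e1 where "e1 = (v - A - c * t) * (1 + n * w)"
  define e2 where "e2 = A * n * (w - b * t ^ 3)"
  define e3 where "e3 = c * t * n * w"
  define e4 where "e4 = v * R"
  have "\<bar>1 + n * w\<bar> \<le> 1 + n * a * t\<^sup>2 / 2"
    using nw by linarith
  then have e1: "\<bar>e1\<bar> \<le> Mv * t\<^sup>2 * (1 + n * a * t\<^sup>2 / 2)"
    unfolding e1_def abs_mult using v(1) Mv by (intro mult_mono) auto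
  have e2: "\<bar>e2\<bar> \<le> \<bar>A\<bar> * n * (M * t ^ 4)"
    unfolding e2_def abs_mult abs_of_pos[OF n] using w(1) n by (intro mult_left_mono) auto
  have "\<bar>t\<bar> * \<bar>w\<bar> \<le> \<bar>t\<bar> * (B * \<bar>t\<bar> ^ 3)"
    using w(2) by (rule mult_left_mono) simp
  also have "\<dots> = B * t ^ 4"
    by (simp add: eval_nat_numeral mult_ac)
  finally have "\<bar>t\<bar> * \<bar>w\<bar> \<le> B * t ^ 4" .
  then have "\<bar>c\<bar> * n * (\<bar>t\<bar> * \<bar>w\<bar>) \<le> \<bar>c\<bar> * n * (B * t ^ 4)"
    using n by (intro mult_left_mono) auto
  moreover have "\<bar>e3\<bar> = \<bar>c\<bar> * n * (\<bar>t\<bar> * \<bar>w\<bar>)"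
    using n by (simp add: e3_def abs_mult mult_ac)
  ultimately have e3: "\<bar>e3\<bar> \<le> \<bar>c\<bar> * n * (B * t ^ 4)"
    by simp
  have "\<bar>R\<bar> \<le> n\<^sup>2 * B\<^sup>2 * t ^ 6 * exp (n * a * t\<^sup>2 / 2)"
    unfolding R_def using w(2) nw by (rule abs_exp_remainder_le)
  then have e4: "\<bar>e4\<bar> \<le> P * (n\<^sup>2 * B\<^sup>2 * t ^ 6 * exp (n * a * t\<^sup>2 / 2))"
    unfolding e4_def abs_mult using v(2) by (intro mult_mono) auto
  have "v * exp (n * w) - (A + c * t + A * n * b * t ^ 3) = e1 + e2 + e3 + e4"
    by (simp add: e1_def e2_def e3_def e4_def R_def algebra_simps)
  then have "\<bar>v * exp (n * w) - (A + c * t + A * n * b * t ^ 3)\<bar>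
               \<le> Mv * t\<^sup>2 * (1 + n * a * t\<^sup>2 / 2) + \<bar>A\<bar> * n * (M * t ^ 4) + \<bar>c\<bar> * n * (B * t ^ 4)
                  + P * (n\<^sup>2 * B\<^sup>2 * t ^ 6 * exp (n * a * t\<^sup>2 / 2))"
    using e1 e2 e3 e4 by (simp add: abs_le_iff)
  then show ?thesis
    by (simp add: algebra_simps power2_eq_square power4_eq_xxxx)
qed

lemma cubic_perturbation_bounds:
  fixes t \<delta> w a b M :: real
  assumes t: "\<bar>t\<bar> \<le> \<delta>" and M: "0 \<le> M"
    and w: "\<bar>w - b * t ^ 3\<bar> \<le> M * t ^ 4"
    and window: "\<bar>b\<bar> * \<delta> + M * \<delta>\<^sup>2 \<le> a / 2"
  shows "\<bar>w\<bar> \<le> (\<bar>b\<bar> + M * \<delta>) * \<bar>t\<bar> ^ 3" "\<bar>w\<bar> \<le> a / 2 * t\<^sup>2"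
proof -
  have t2: "t\<^sup>2 \<le> \<delta>\<^sup>2"
    using t abs_le_square_iff[of t \<delta>] by (cases "0 \<le> \<delta>") auto
  have ineqs: "\<bar>t\<bar> * \<bar>t\<bar> ^ 3 \<le> \<delta> * \<bar>t\<bar> ^ 3" "t\<^sup>2 * t\<^sup>2 \<le> \<delta>\<^sup>2 * t\<^sup>2" "\<bar>t\<bar> * t\<^sup>2 \<le> \<delta> * t\<^sup>2"
    by (intro mult_right_mono t t2; simp)+
  have powers: "t ^ 4 = \<bar>t\<bar> * \<bar>t\<bar> ^ 3" "t ^ 4 = t\<^sup>2 * t\<^sup>2" "\<bar>t\<bar> ^ 3 = \<bar>t\<bar> * t\<^sup>2"
    by (cases "0 \<le> t"; simp add: power4_eq_xxxx power3_eq_cube power2_eq_square)+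
  have t4: "t ^ 4 \<le> \<delta> * \<bar>t\<bar> ^ 3" "t ^ 4 \<le> \<delta>\<^sup>2 * t\<^sup>2" "\<bar>t\<bar> ^ 3 \<le> \<delta> * t\<^sup>2"
    using ineqs by (simp only: powers(1), simp only: powers(2), simp only: powers(3))
  have w3: "\<bar>w\<bar> \<le> \<bar>b\<bar> * \<bar>t\<bar> ^ 3 + M * t ^ 4"
    using w abs_triangle_ineq[of "w - b * t ^ 3" "b * t ^ 3"] by (simp add: abs_mult power_abs)
  then show "\<bar>w\<bar> \<le> (\<bar>b\<bar> + M * \<delta>) * \<bar>t\<bar> ^ 3"
    using mult_left_mono[OF t4(1) M] by (simp add: algebra_simps)
  have "\<bar>w\<bar> \<le> (\<bar>b\<bar> * \<delta> + M * \<delta>\<^sup>2) * t\<^sup>2"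
    using w3 mult_left_mono[OF t4(2) M] mult_left_mono[OF t4(3), of "\<bar>b\<bar>"]
    by (simp add: algebra_simps)
  also have "\<dots> \<le> a / 2 * t\<^sup>2"
    using window by (rule mult_right_mono) simp
  finally show "\<bar>w\<bar> \<le> a / 2 * t\<^sup>2" .
qed

lemma cubic_polynomial_mult_exp_le:
  fixes x a p q r :: real
  assumes x: "0 \<le> x" and a: "0 < a" and coeffs: "0 \<le> p" "0 \<le> q" "0 \<le> r"
  shows "p * (x * exp (- (a * x))) + q * (x\<^sup>2 * exp (- (a * x))) + r * (x ^ 3 * exp (- (a * x / 2)))
           \<le> (4 * p / a + 32 * q / a\<^sup>2 + 384 * r / a ^ 3) * exp (- (a * x / 4))"
proof -
  have absorb: "x ^ k * exp (- (a * x / 2)) \<le> fact k * (4 / a) ^ k * exp (- (a * x / 4))" for k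
  proof -
    have "x ^ k * exp (- (a / 4 * x)) \<le> fact k / (a / 4) ^ k"
      using x a by (intro power_mult_exp_le) auto
    from mult_right_mono[OF this, of "exp (- (a * x / 4))"]
    show ?thesis
      by (simp add: power_divide mult_ac flip: exp_add)
  qed
  have decay: "x ^ k * exp (- (a * x)) \<le> x ^ k * exp (- (a * x / 2))" for k
    using x a by (intro mult_left_mono) auto
  have "x * exp (- (a * x)) \<le> 4 / a * exp (- (a * x / 4))"
    using decay[of 1] absorb[of 1] by simp
  moreover have "x\<^sup>2 * exp (- (a * x)) \<le> 2 * (4 / a)\<^sup>2 * exp (- (a * x / 4))"
    using decay[of 2] absorb[of 2] by simp
  moreover have "x ^ 3 * exp (- (a * x / 2)) \<le> 6 * (4 / a) ^ 3 * exp (- (a * x / 4))"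
    using absorb[of 3] by (simp add: fact_numeral)
  ultimately have "p * (x * exp (- (a * x))) + q * (x\<^sup>2 * exp (- (a * x))) + r * (x ^ 3 * exp (- (a * x / 2)))
                     \<le> p * (4 / a * exp (- (a * x / 4))) + q * (2 * (4 / a)\<^sup>2 * exp (- (a * x / 4)))
                       + r * (6 * (4 / a) ^ 3 * exp (- (a * x / 4)))"
    using coeffs by (intro add_mono mult_left_mono) auto
  then show ?thesis
    by (simp add: algebra_simps power2_eq_square power3_eq_cube)
qed

lemma abs_le_of_linear_approx:
  fixes v A c t \<delta> Mv :: real
  assumes v: "\<bar>v - A - c * t\<bar> \<le> Mv * t\<^sup>2" and t: "\<bar>t\<bar> \<le> \<delta>" and Mv: "0 \<le> Mv"
  shows "\<bar>v\<bar> \<le> \<bar>A\<bar> + \<bar>c\<bar> * \<delta> + Mv * \<delta>\<^sup>2"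
proof -
  have "\<bar>v\<bar> \<le> \<bar>v - A - c * t\<bar> + \<bar>A\<bar> + \<bar>c\<bar> * \<bar>t\<bar>"
    using abs_triangle_ineq[of "v - A - c * t" "A + c * t"] abs_triangle_ineq[of A "c * t"]
    by (simp add: abs_mult)
  also have "\<dots> \<le> Mv * \<delta>\<^sup>2 + \<bar>A\<bar> + \<bar>c\<bar> * \<delta>"
    using order_trans[OF v mult_left_mono[OF power_mono[OF t abs_ge_zero, of 2] Mv, simplified]]
      mult_left_mono[OF t, of "\<bar>c\<bar>"]
    by simp
  finally show ?thesis
    by simp
qed

lemma laplace_pointwise_error:
  fixes a b c A M Mv \<delta> n t v g :: real
  assumes a: "0 < a" and n: "1 \<le> n" and t: "\<bar>t\<bar> \<le> \<delta>" and M: "0 \<le> M" and Mv: "0 \<le> Mv"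
    and g: "\<bar>g + a * t\<^sup>2 - b * t ^ 3\<bar> \<le> M * t ^ 4"
    and window: "\<bar>b\<bar> * \<delta> + M * \<delta>\<^sup>2 \<le> a / 2"
    and v: "\<bar>v - A - c * t\<bar> \<le> Mv * t\<^sup>2"
  shows "\<bar>v * exp (n * g) - exp (- (n * a * t\<^sup>2)) * (A + c * t + A * n * b * t ^ 3)\<bar>
           \<le> (4 * Mv / a + 32 * (Mv * a / 2 + \<bar>A\<bar> * M + \<bar>c\<bar> * (\<bar>b\<bar> + M * \<delta>)) / a\<^sup>2
               + 384 * ((\<bar>A\<bar> + \<bar>c\<bar> * \<delta> + Mv * \<delta>\<^sup>2) * (\<bar>b\<bar> + M * \<delta>)\<^sup>2) / a ^ 3) / n
             * exp (- (n * a * t\<^sup>2 / 4))"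
proof -
  define w where "w = g + a * t\<^sup>2"
  define B where "B = \<bar>b\<bar> + M * \<delta>"
  define P where "P = \<bar>A\<bar> + \<bar>c\<bar> * \<delta> + Mv * \<delta>\<^sup>2"
  define Q where "Q = Mv * a / 2 + \<bar>A\<bar> * M + \<bar>c\<bar> * B"
  define x where "x = n * t\<^sup>2"
  \<comment> \<open>With x = n t^2 each error term is at most x^k exp (- a x / 2) / n, and
    x^k exp (- a x / 4) is bounded.\<close>
  have x0: "0 \<le> x" "0 < n"
    using n by (auto simp: x_def)
  have w_cubic: "\<bar>w - b * t ^ 3\<bar> \<le> M * t ^ 4"
    using g by (simp add: w_def)
  note w_bounds = cubic_perturbation_bounds[OF t M w_cubic window, folded B_def]
  have v_P: "\<bar>v\<bar> \<le> P"
    unfolding P_def by (rule abs_le_of_linear_approx[OF v t Mv])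
  have "exp (n * w) = exp (n * g) * exp (a * x)"
    by (simp add: w_def x_def algebra_simps flip: exp_add)
  then have "v * exp (n * g) - exp (- (a * x)) * (A + c * t + A * n * b * t ^ 3)
               = exp (- (a * x)) * (v * exp (n * w) - (A + c * t + A * n * b * t ^ 3))"
    by (simp add: exp_minus field_simps)
  then have "\<bar>v * exp (n * g) - exp (- (n * a * t\<^sup>2)) * (A + c * t + A * n * b * t ^ 3)\<bar>
               = exp (- (a * x)) * \<bar>v * exp (n * w) - (A + c * t + A * n * b * t ^ 3)\<bar>"
    by (simp add: x_def abs_mult mult_ac)
  also have "\<dots> \<le> exp (- (a * x)) * (Mv * t\<^sup>2 + Q * (n * t ^ 4) + P * B\<^sup>2 * (n\<^sup>2 * t ^ 6) * exp (n * a * t\<^sup>2 / 2))"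
    unfolding Q_def using exp_expansion_error[OF x0(2) Mv v v_P w_cubic w_bounds] by simp
  also have "\<dots> = (Mv * (x * exp (- (a * x))) + Q * (x\<^sup>2 * exp (- (a * x)))
                   + P * B\<^sup>2 * (x ^ 3 * exp (- (a * x / 2)))) / n"
    using x0 by (simp add: x_def field_simps power2_eq_square eval_nat_numeral flip: exp_add)
  also have "\<dots> \<le> (4 * Mv / a + 32 * Q / a\<^sup>2 + 384 * (P * B\<^sup>2) / a ^ 3) * exp (- (a * x / 4)) / n"
    using x0 t M Mv a v_P
    by (intro divide_right_mono cubic_polynomial_mult_exp_le) (auto simp: Q_def B_def)
  finally show ?thesis
    by (simp add: Q_def B_def P_def x_def mult_ac)
qed

section \<open>Laplace's method\<close>

definition laplace_integral :: "real \<Rightarrow> (real \<Rightarrow> real) \<Rightarrow> (real \<Rightarrow> real) \<Rightarrow> real \<Rightarrow> real" where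
  "laplace_integral L \<phi> g n = (\<integral>t. indicator {-L..} t * (\<phi> t * exp (n * g t)) \<partial>lborel)"

lemma bigoI_at_top_ge:
  fixes f h :: "real \<Rightarrow> real" and N C :: real
  assumes "\<And>x. N \<le> x \<Longrightarrow> \<bar>f x\<bar> \<le> C * \<bar>h x\<bar>"
  shows "f \<in> O(h)"
  using assms by (intro bigoI[of _ C] eventually_mono[OF eventually_ge_at_top[of N]]) auto

locale laplace_setup =
  fixes \<phi> g :: "real \<Rightarrow> real" and a b c A M Mv \<delta> L \<gamma> K \<beta> :: real
  assumes amplitude_measurable [measurable]: "\<phi> \<in> borel_measurable borel"
    and phase_measurable [measurable]: "g \<in> borel_measurable borel"
    and a_pos: "0 < a" and \<delta>_pos: "0 < \<delta>" and \<delta>_le_L: "\<delta> \<le> L" and \<gamma>_pos: "0 < \<gamma>"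
    and phase_expansion: "\<And>t. \<bar>t\<bar> \<le> \<delta> \<Longrightarrow> \<bar>g t + a * t\<^sup>2 - b * t ^ 3\<bar> \<le> M * t ^ 4"
    and amplitude_expansion: "\<And>t. \<bar>t\<bar> \<le> \<delta> \<Longrightarrow> \<bar>\<phi> t - A - c * t\<bar> \<le> Mv * t\<^sup>2"
    and window_small: "\<bar>b\<bar> * \<delta> + M * \<delta>\<^sup>2 \<le> a / 2"
    and phase_decay: "\<And>t. -L \<le> t \<Longrightarrow> g t \<le> - (\<gamma> * t\<^sup>2)"
    and amplitude_growth: "\<And>t. -L \<le> t \<Longrightarrow> \<bar>\<phi> t\<bar> \<le> K * exp (\<beta> * \<bar>t\<bar>)"
begin

lemma M_nonneg: "0 \<le> M"
proof -
  have "0 \<le> M * \<delta> ^ 4"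
    using phase_expansion[of \<delta>] \<delta>_pos by (auto intro: order_trans[OF abs_ge_zero])
  then show ?thesis
    using \<delta>_pos by (simp add: zero_le_mult_iff)
qed

lemma Mv_nonneg: "0 \<le> Mv"
proof -
  have "0 \<le> Mv * \<delta>\<^sup>2"
    using amplitude_expansion[of \<delta>] \<delta>_pos by (auto intro: order_trans[OF abs_ge_zero])
  then show ?thesis
    using \<delta>_pos by (simp add: zero_le_mult_iff)
qed

lemma K_nonneg: "0 \<le> K"
  using amplitude_growth[of 0] \<delta>_pos \<delta>_le_L by (auto intro: order_trans[OF abs_ge_zero])

lemma integrand_bound:
  assumes t: "-L \<le> t" and n: "1 \<le> n"
  shows "\<bar>\<phi> t * exp (n * g t)\<bar>
           \<le> K * exp (\<beta>\<^sup>2 / (2 * \<gamma>)) * exp (- ((n - 1) * (\<gamma> * t\<^sup>2))) * exp (- (\<gamma> / 2 * t\<^sup>2))"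
proof -
  have "0 \<le> (\<beta> - \<gamma> * \<bar>t\<bar>)\<^sup>2"
    by simp
  then have "\<beta> * \<bar>t\<bar> \<le> \<beta>\<^sup>2 / (2 * \<gamma>) + \<gamma> / 2 * t\<^sup>2"
    using \<gamma>_pos by (simp add: field_simps power2_eq_square)
  moreover have "n * g t \<le> - (n * (\<gamma> * t\<^sup>2))"
    using mult_left_mono[OF phase_decay[OF t], of n] n by simp
  ultimately have "\<beta> * \<bar>t\<bar> + n * g t \<le> \<beta>\<^sup>2 / (2 * \<gamma>) + (- ((n - 1) * (\<gamma> * t\<^sup>2))) + (- (\<gamma> / 2 * t\<^sup>2))"
    by (simp add: algebra_simps)
  then have "exp (\<beta> * \<bar>t\<bar>) * exp (n * g t)
               \<le> exp (\<beta>\<^sup>2 / (2 * \<gamma>)) * exp (- ((n - 1) * (\<gamma> * t\<^sup>2))) * exp (- (\<gamma> / 2 * t\<^sup>2))"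
    by (simp flip: exp_add)
  then have "K * (exp (\<beta> * \<bar>t\<bar>) * exp (n * g t))
               \<le> K * (exp (\<beta>\<^sup>2 / (2 * \<gamma>)) * exp (- ((n - 1) * (\<gamma> * t\<^sup>2))) * exp (- (\<gamma> / 2 * t\<^sup>2)))"
    using K_nonneg by (rule mult_left_mono)
  moreover have "\<bar>\<phi> t * exp (n * g t)\<bar> \<le> K * exp (\<beta> * \<bar>t\<bar>) * exp (n * g t)"
    unfolding abs_mult abs_exp_cancel using amplitude_growth[OF t] by (rule mult_right_mono) simp
  ultimately show ?thesis
    by (simp add: mult_ac)
qed

lemma integrable_integrand:
  assumes S: "S \<subseteq> {-L..}" "S \<in> sets borel" and n: "1 \<le> n"
  shows "integrable lborel (\<lambda>t. indicator S t * (\<phi> t * exp (n * g t)))"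
proof (rule Bochner_Integration.integrable_bound)
  show "integrable lborel (\<lambda>t. K * exp (\<beta>\<^sup>2 / (2 * \<gamma>)) * exp (- (\<gamma> / 2 * t\<^sup>2)))"
    using integrable_exp_neg_square[of "\<gamma> / 2"] \<gamma>_pos by simp
  show "(\<lambda>t. indicator S t * (\<phi> t * exp (n * g t))) \<in> borel_measurable lborel"
    using S(2) by measurable
  have "\<bar>\<phi> t * exp (n * g t)\<bar> \<le> K * exp (\<beta>\<^sup>2 / (2 * \<gamma>)) * exp (- (\<gamma> / 2 * t\<^sup>2))" if "-L \<le> t" for t
  proof -
    have "exp (- ((n - 1) * (\<gamma> * t\<^sup>2))) \<le> 1"
      using n \<gamma>_pos by simp
    then have "K * exp (\<beta>\<^sup>2 / (2 * \<gamma>)) * exp (- ((n - 1) * (\<gamma> * t\<^sup>2))) * exp (- (\<gamma> / 2 * t\<^sup>2))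
                 \<le> K * exp (\<beta>\<^sup>2 / (2 * \<gamma>)) * 1 * exp (- (\<gamma> / 2 * t\<^sup>2))"
      using K_nonneg by (intro mult_right_mono mult_left_mono) auto
    then show ?thesis
      using integrand_bound[OF that n] by simp
  qed
  then show "AE t in lborel. norm (indicator S t * (\<phi> t * exp (n * g t)))
               \<le> norm (K * exp (\<beta>\<^sup>2 / (2 * \<gamma>)) * exp (- (\<gamma> / 2 * t\<^sup>2)))"
    using S(1) K_nonneg by (auto simp: indicator_def)
qed

lemma tail_bound:
  assumes n: "1 \<le> n"
  shows "\<bar>\<integral>t. indicator {t. -L \<le> t \<and> \<delta> < \<bar>t\<bar>} t * (\<phi> t * exp (n * g t)) \<partial>lborel\<bar>
           \<le> K * exp (\<beta>\<^sup>2 / (2 * \<gamma>)) * sqrt (2 * pi / \<gamma>) * exp (- ((n - 1) * (\<gamma> * \<delta>\<^sup>2)))"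
proof -
  define S where "S = {t. -L \<le> t \<and> \<delta> < \<bar>t\<bar>}"
  define D where "D = K * exp (\<beta>\<^sup>2 / (2 * \<gamma>)) * exp (- ((n - 1) * (\<gamma> * \<delta>\<^sup>2)))"
  have pointwise: "\<bar>indicator S t * (\<phi> t * exp (n * g t))\<bar> \<le> D * exp (- (\<gamma> / 2 * t\<^sup>2))" for t
  proof (cases "t \<in> S")
    case True
    then have t: "-L \<le> t" "\<delta>\<^sup>2 \<le> t\<^sup>2"
      using \<delta>_pos abs_le_square_iff[of \<delta> t] by (auto simp: S_def)
    then have "exp (- ((n - 1) * (\<gamma> * t\<^sup>2))) \<le> exp (- ((n - 1) * (\<gamma> * \<delta>\<^sup>2)))"
      using n \<gamma>_pos by (simp add: mult_left_mono)
    then have "K * exp (\<beta>\<^sup>2 / (2 * \<gamma>)) * exp (- ((n - 1) * (\<gamma> * t\<^sup>2))) * exp (- (\<gamma> / 2 * t\<^sup>2))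
                 \<le> D * exp (- (\<gamma> / 2 * t\<^sup>2))"
      unfolding D_def using K_nonneg by (intro mult_right_mono mult_left_mono) auto
    from order_trans[OF integrand_bound[OF t(1) n] this] show ?thesis
      using True by simp
  qed (use K_nonneg in \<open>simp add: D_def\<close>)
  have "\<bar>\<integral>t. indicator S t * (\<phi> t * exp (n * g t)) \<partial>lborel\<bar> \<le> (\<integral>t. D * exp (- (\<gamma> / 2 * t\<^sup>2)) \<partial>lborel)"
    using integrable_integrand[of S n] integrable_exp_neg_square[of "\<gamma> / 2"] \<gamma>_pos n pointwise
    by (intro integral_abs_bound_integral) (auto simp: S_def)
  also have "\<dots> = D * sqrt (2 * pi / \<gamma>)"
    using integral_exp_neg_square[of "\<gamma> / 2"] \<gamma>_pos by simp
  finally show ?thesis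
    unfolding S_def D_def by (simp add: mult_ac)
qed

definition local_error_const :: real where
  "local_error_const = 4 * Mv / a + 32 * (Mv * a / 2 + \<bar>A\<bar> * M + \<bar>c\<bar> * (\<bar>b\<bar> + M * \<delta>)) / a\<^sup>2
    + 384 * ((\<bar>A\<bar> + \<bar>c\<bar> * \<delta> + Mv * \<delta>\<^sup>2) * (\<bar>b\<bar> + M * \<delta>)\<^sup>2) / a ^ 3"

lemma local_error_const_nonneg: "0 \<le> local_error_const"
  unfolding local_error_const_def using a_pos \<delta>_pos M_nonneg Mv_nonneg
  by (intro add_nonneg_nonneg) auto

lemma window_integrand_error:
  assumes n: "1 \<le> n"
  shows "\<bar>indicator {-\<delta>..\<delta>} t * (\<phi> t * exp (n * g t))
            - indicator {-\<delta>..\<delta>} t * (exp (- (n * a * t\<^sup>2)) * (A + c * t + A * n * b * t ^ 3))\<bar>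
           \<le> local_error_const / n * exp (- (n * a / 4 * t\<^sup>2))"
proof (cases "\<bar>t\<bar> \<le> \<delta>")
  case True
  then have "indicator {-\<delta>..\<delta>} t = (1 :: real)"
    by (simp add: indicator_def abs_le_iff)
  then show ?thesis
    using laplace_pointwise_error[OF a_pos n True M_nonneg Mv_nonneg phase_expansion[OF True]
        window_small amplitude_expansion[OF True]]
    by (simp add: local_error_const_def)
next
  case False
  then have "indicator {-\<delta>..\<delta>} t = (0 :: real)"
    by (auto simp: indicator_def)
  then show ?thesis
    using local_error_const_nonneg n by simp
qed

lemma window_error:
  "(\<lambda>n. (\<integral>t. indicator {-\<delta>..\<delta>} t * (\<phi> t * exp (n * g t)) \<partial>lborel)
         - A * (\<integral>t. indicator {-\<delta>..\<delta>} t * exp (- (n * a * t\<^sup>2)) \<partial>lborel))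
     \<in> O(\<lambda>n. 1 / (n * sqrt n))"
proof (rule bigoI_at_top_ge[where N = 1 and C = "local_error_const * sqrt (4 * pi / a)"])
  fix n :: real
  assume n: "1 \<le> n"
  define C where "C = local_error_const"
  define W where "W t = (indicator {-\<delta>..\<delta>} t :: real)" for t :: real
  define G where "G t = exp (- (n * a * t\<^sup>2))" for t
  define E where "E t = W t * (\<phi> t * exp (n * g t))" for t
  define oddpart where "oddpart t = W t * (G t * (c * t + A * n * b * t ^ 3))" for t
  define D where "D t = E t - W t * (G t * (A + c * t + A * n * b * t ^ 3))" for t
  have "integrable lborel (\<lambda>t. G t * indicator {-\<delta>..\<delta>} t)"
    by (intro borel_integrable_atLeastAtMost) (simp add: G_def)
  then have ints: "integrable lborel E" "integrable lborel (\<lambda>t. W t * G t)" "integrable lborel oddpart"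
  proof -
    show "integrable lborel E"
      unfolding E_def[abs_def] W_def using n \<delta>_le_L by (intro integrable_integrand) auto
    show "integrable lborel oddpart"
      unfolding oddpart_def[abs_def] W_def G_def by (rule integral_odd_gaussian_window(1))
  qed (simp add: W_def mult.commute)
  have "(\<integral>t. oddpart t \<partial>lborel) = 0"
    unfolding oddpart_def W_def G_def by (rule integral_odd_gaussian_window(2))
  moreover have D_eq: "D = (\<lambda>t. E t - (A * (W t * G t) + oddpart t))"
    by (simp add: fun_eq_iff D_def oddpart_def ring_distribs)
  ultimately have split: "(\<integral>t. E t \<partial>lborel) - A * (\<integral>t. W t * G t \<partial>lborel) = (\<integral>t. D t \<partial>lborel)"
    using ints by simp
  have "integrable lborel D"
    unfolding D_eq using ints by simp
  moreover have "\<bar>D t\<bar> \<le> C / n * exp (- (n * a / 4 * t\<^sup>2))" for t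
    using window_integrand_error[OF n, of t] by (simp add: D_def E_def W_def G_def C_def)
  ultimately have "\<bar>\<integral>t. D t \<partial>lborel\<bar> \<le> (\<integral>t. C / n * exp (- (n * a / 4 * t\<^sup>2)) \<partial>lborel)"
    using integrable_exp_neg_square[of "n * a / 4"] a_pos n by (intro integral_abs_bound_integral) auto
  also have "\<dots> = C / n * sqrt (4 * pi / a / n)"
    using integral_exp_neg_square[of "n * a / 4"] a_pos n by (simp add: mult.commute real_sqrt_mult)
  also have "\<dots> = C * sqrt (4 * pi / a) * \<bar>1 / (n * sqrt n)\<bar>"
    using n by (simp add: real_sqrt_divide real_sqrt_mult)
  finally show "\<bar>(\<integral>t. indicator {-\<delta>..\<delta>} t * (\<phi> t * exp (n * g t)) \<partial>lborel)
                  - A * (\<integral>t. indicator {-\<delta>..\<delta>} t * exp (- (n * a * t\<^sup>2)) \<partial>lborel)\<bar>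
                \<le> local_error_const * sqrt (4 * pi / a) * \<bar>1 / (n * sqrt n)\<bar>"
    using split by (simp add: C_def E_def W_def G_def)
qed

lemma laplace_integral_split:
  assumes n: "1 \<le> n"
  shows "laplace_integral L \<phi> g n
           = (\<integral>t. indicator {-\<delta>..\<delta>} t * (\<phi> t * exp (n * g t)) \<partial>lborel)
             + (\<integral>t. indicator {t. -L \<le> t \<and> \<delta> < \<bar>t\<bar>} t * (\<phi> t * exp (n * g t)) \<partial>lborel)"
proof -
  define S where "S = {t. -L \<le> t \<and> \<delta> < \<bar>t\<bar>}"
  have "indicator {-L..} t * (\<phi> t * exp (n * g t))
          = indicator {-\<delta>..\<delta>} t * (\<phi> t * exp (n * g t)) + indicator S t * (\<phi> t * exp (n * g t))" for t
    using \<delta>_pos \<delta>_le_L by (auto simp: indicator_def S_def)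
  moreover have "S \<subseteq> {-L..}" "S \<in> sets borel"
    unfolding S_def by auto
  ultimately show ?thesis
    using integrable_integrand[of "{-\<delta>..\<delta>}" n] integrable_integrand[of S n] n \<delta>_le_L
    by (simp add: laplace_integral_def S_def)
qed

lemma laplace_integral_asymptotics:
  "(\<lambda>n. laplace_integral L \<phi> g n - A * sqrt (pi / (a * n))) \<in> O(\<lambda>n. 1 / (n * sqrt n))"
proof -
  define S where "S = {t. -L \<le> t \<and> \<delta> < \<bar>t\<bar>}"
  define tail where "tail n = (\<integral>t. indicator S t * (\<phi> t * exp (n * g t)) \<partial>lborel)" for n
  define window where "window n = (\<integral>t. indicator {-\<delta>..\<delta>} t * (\<phi> t * exp (n * g t)) \<partial>lborel)" for n
  define gauss where "gauss n = (\<integral>t. indicator {-\<delta>..\<delta>} t * exp (- (n * a * t\<^sup>2)) \<partial>lborel)" for n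
  have split: "laplace_integral L \<phi> g n - A * sqrt (pi / (a * n))
                 = tail n + (window n - A * gauss n) + A * (gauss n - sqrt (pi / (n * a)))"
    if "1 \<le> n" for n
    using laplace_integral_split[OF that] by (simp add: tail_def window_def S_def algebra_simps)
  have "tail \<in> O(\<lambda>n. exp (- ((n - 1) * (\<gamma> * \<delta>\<^sup>2))))"
    by (rule bigoI_at_top_ge[where N = 1 and C = "K * exp (\<beta>\<^sup>2 / (2 * \<gamma>)) * sqrt (2 * pi / \<gamma>)"])
      (use tail_bound in \<open>simp add: tail_def S_def\<close>)
  also have "(\<lambda>n. exp (- ((n - 1) * (\<gamma> * \<delta>\<^sup>2)))) \<in> O(\<lambda>n. 1 / (n * sqrt n))"
    using \<gamma>_pos \<delta>_pos by real_asymp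
  finally have tail: "tail \<in> O(\<lambda>n. 1 / (n * sqrt n))" .
  have "(\<lambda>n. gauss n - sqrt (pi / (n * a))) \<in> O(\<lambda>n. exp (- ((n - 1) * (a * \<delta>\<^sup>2))))"
    by (rule bigoI_at_top_ge[where N = 1 and C = "sqrt (pi / a)"])
      (use gaussian_truncation_error[OF a_pos less_imp_le[OF \<delta>_pos]] in \<open>simp add: gauss_def\<close>)
  also have "(\<lambda>n. exp (- ((n - 1) * (a * \<delta>\<^sup>2)))) \<in> O(\<lambda>n. 1 / (n * sqrt n))"
    using a_pos \<delta>_pos by real_asymp
  finally have gauss: "(\<lambda>n. A * (gauss n - sqrt (pi / (n * a)))) \<in> O(\<lambda>n. 1 / (n * sqrt n))"
    by simp
  have window: "(\<lambda>n. window n - A * gauss n) \<in> O(\<lambda>n. 1 / (n * sqrt n))"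
    using window_error by (simp add: window_def gauss_def)
  have "(\<lambda>n. tail n + (window n - A * gauss n) + A * (gauss n - sqrt (pi / (n * a))))
          \<in> O(\<lambda>n. 1 / (n * sqrt n))"
    by (intro sum_in_bigo(1) tail window gauss)
  then show ?thesis
    using split by (subst landau_o.big.in_cong) (auto intro: eventually_mono[OF eventually_ge_at_top[of 1]])
qed

lemma laplace_relative_error:
  assumes "A \<noteq> 0"
  shows "(\<lambda>n. laplace_integral L \<phi> g n / (A * sqrt (pi / (a * n))) - 1) \<in> O(\<lambda>n. 1 / n)"
proof -
  have "(\<lambda>n. (laplace_integral L \<phi> g n - A * sqrt (pi / (a * n))) * sqrt n)
          \<in> O(\<lambda>n. 1 / (n * sqrt n) * sqrt n)"
    using laplace_integral_asymptotics by (rule landau_o.big.mult_right)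
  also have "(\<lambda>n. 1 / (n * sqrt n) * sqrt n) \<in> O(\<lambda>n. 1 / n)"
    by real_asymp
  finally have "(\<lambda>n. (laplace_integral L \<phi> g n - A * sqrt (pi / (a * n))) * sqrt n / (A * sqrt (pi / a)))
                  \<in> O(\<lambda>n. 1 / n)"
    using assms a_pos by simp
  moreover have "laplace_integral L \<phi> g n / (A * sqrt (pi / (a * n))) - 1
                   = (laplace_integral L \<phi> g n - A * sqrt (pi / (a * n))) * sqrt n / (A * sqrt (pi / a))"
    if "0 < n" for n
    using that assms a_pos by (simp add: real_sqrt_divide real_sqrt_mult field_simps)
  ultimately show ?thesis
    by (subst landau_o.big.in_cong) (auto intro: eventually_mono[OF eventually_gt_at_top[of 0]])
qed

end

section \<open>The integral X\<close>

lemma Xint_integrand_shift: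
  fixes q C xc F0 w \<alpha> n t :: real
  assumes xc: "0 < xc"
    and phase: "ln (1 + (xc + t)\<^sup>2 / 2) - (xc + t - sqrt 2 * q)\<^sup>2 / (2 * C) = F0 + w"
  shows "((xc + t) / sqrt 2) powr \<alpha> * (1 + ((xc + t) / sqrt 2)\<^sup>2) powr n
           * exp (- n * ((xc + t) / sqrt 2 - q)\<^sup>2 / C)
         = sqrt 2 * exp (n * F0) * ((xc / sqrt 2) powr \<alpha> / sqrt 2 * (1 + t / xc) powr \<alpha> * exp (n * w))"
proof -
  have factor: "(xc + t) / sqrt 2 = xc / sqrt 2 * (1 + t / xc)"
    using xc by (simp add: field_simps)
  have "((xc + t) / sqrt 2) powr \<alpha> = (xc / sqrt 2) powr \<alpha> * (1 + t / xc) powr \<alpha>"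
    unfolding factor by (rule powr_mult)
  moreover have "(1 + ((xc + t) / sqrt 2)\<^sup>2) powr n = exp (n * ln (1 + (xc + t)\<^sup>2 / 2))"
    using add_pos_nonneg[of 1 "(xc + t)\<^sup>2 / 2"] by (simp add: powr_def power_divide mult.commute)
  moreover have "- n * ((xc + t) / sqrt 2 - q)\<^sup>2 / C = - (n * ((xc + t - sqrt 2 * q)\<^sup>2 / (2 * C)))"
  proof -
    have "(xc + t) / sqrt 2 - q = (xc + t - sqrt 2 * q) / sqrt 2"
      by (simp add: field_simps)
    then show ?thesis
      by (simp add: power_divide)
  qed
  ultimately show ?thesis
    using phase by (simp add: ring_distribs exp_diff exp_add field_simps flip: exp_add)
qed

lemma Xint_eq_laplace_integral:
  fixes q C xc L F0 \<alpha> n :: real and g :: "real \<Rightarrow> real"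
  defines "\<phi> \<equiv> \<lambda>t. (xc / sqrt 2) powr \<alpha> / sqrt 2 * (1 + t / xc) powr \<alpha>"
  assumes xc: "0 < xc" and L: "L = xc - sqrt 2 * q"
    and phase: "\<And>t. -L \<le> t \<Longrightarrow> ln (1 + (xc + t)\<^sup>2 / 2) - (xc + t - sqrt 2 * q)\<^sup>2 / (2 * C) = F0 + g t"
    and int: "integrable lborel (\<lambda>t. indicator {-L..} t * (\<phi> t * exp (n * g t)))"
  shows "Xint q C \<alpha> n = exp (n * F0) * laplace_integral L \<phi> g n"
proof -
  define F where "F \<rho> = indicator {q..} \<rho> * (\<rho> powr \<alpha> * (1 + \<rho>\<^sup>2) powr n * exp (- n * (\<rho> - q)\<^sup>2 / C))"
    for \<rho> :: real
  have shift: "F (xc / sqrt 2 + 1 / sqrt 2 * t)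
                 = sqrt 2 * exp (n * F0) * (indicator {-L..} t * (\<phi> t * exp (n * g t)))" for t
  proof (cases "-L \<le> t")
    case True
    then have "q \<le> (xc + t) / sqrt 2"
      using L by (simp add: le_divide_eq mult.commute)
    then show ?thesis
      using Xint_integrand_shift[OF xc phase[OF True]] True L
      by (simp add: F_def \<phi>_def add_divide_distrib)
  next
    case False
    then have "(xc + t) / sqrt 2 < q"
      using L by (simp add: divide_less_eq mult.commute)
    then show ?thesis
      using False by (simp add: F_def add_divide_distrib)
  qed
  have "integrable lborel (\<lambda>t. F (xc / sqrt 2 + 1 / sqrt 2 * t))"
    unfolding shift using int by simp
  then have "set_integrable lborel {q..} (\<lambda>\<rho>. \<rho> powr \<alpha> * (1 + \<rho>\<^sup>2) powr n * exp (- n * (\<rho> - q)\<^sup>2 / C))"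
    using lborel_integrable_real_affine_iff[of "1 / sqrt 2" F "xc / sqrt 2"]
    by (simp add: set_integrable_def F_def[abs_def])
  then have "Xint q C \<alpha> n = (\<integral>\<rho>. F \<rho> \<partial>lborel)"
    unfolding Xint_def by (simp add: set_borel_integral_eq_integral(2)[symmetric] set_lebesgue_integral_def F_def)
  also have "\<dots> = \<bar>1 / sqrt 2\<bar> *\<^sub>R (\<integral>t. F (xc / sqrt 2 + 1 / sqrt 2 * t) \<partial>lborel)"
    by (rule lborel_integral_real_affine) simp
  also have "\<dots> = exp (n * F0) * laplace_integral L \<phi> g n"
    unfolding shift by (simp add: laplace_integral_def)
  finally show ?thesis .
qed

lemma scaled_powr_expansion:
  fixes A xc \<alpha> t :: real
  assumes xc: "0 < xc" and t: "\<bar>t\<bar> \<le> xc / 2"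
  shows "\<bar>A * (1 + t / xc) powr \<alpha> - A - A * \<alpha> / xc * t\<bar>
           \<le> \<bar>A\<bar> * (\<bar>\<alpha> * (\<alpha> - 1)\<bar> / 2 * 2 powr \<bar>\<alpha> - 2\<bar>) / xc\<^sup>2 * t\<^sup>2"
proof -
  have s: "\<bar>t / xc\<bar> \<le> 1/2"
    using t xc by (simp add: abs_divide divide_le_eq)
  have "A * (1 + t / xc) powr \<alpha> - A - A * \<alpha> / xc * t = A * ((1 + t / xc) powr \<alpha> - 1 - \<alpha> * (t / xc))"
    by (simp add: algebra_simps)
  then have "\<bar>A * (1 + t / xc) powr \<alpha> - A - A * \<alpha> / xc * t\<bar>
               = \<bar>A\<bar> * \<bar>(1 + t / xc) powr \<alpha> - 1 - \<alpha> * (t / xc)\<bar>"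
    by (simp add: abs_mult)
  also have "\<dots> \<le> \<bar>A\<bar> * (\<bar>\<alpha> * (\<alpha> - 1)\<bar> / 2 * 2 powr \<bar>\<alpha> - 2\<bar> * (t / xc)\<^sup>2)"
    using one_plus_powr_taylor[OF s] by (rule mult_left_mono) simp
  finally show ?thesis
    by (simp add: power_divide)
qed

lemma scaled_powr_growth:
  fixes A xc \<alpha> t :: real
  assumes xc: "0 < xc" and t: "- (xc / 2) \<le> t"
  shows "\<bar>A * (1 + t / xc) powr \<alpha>\<bar> \<le> \<bar>A\<bar> * exp \<bar>\<alpha>\<bar> * exp (\<bar>\<alpha>\<bar> / xc * \<bar>t\<bar>)"
proof -
  have "-1/2 \<le> t / xc"
    using t xc by (simp add: le_divide_eq)
  from one_plus_powr_le_exp[OF this, of \<alpha>]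
  have "(1 + t / xc) powr \<alpha> \<le> exp \<bar>\<alpha>\<bar> * exp (\<bar>\<alpha>\<bar> / xc * \<bar>t\<bar>)"
    using xc by (simp add: abs_divide)
  then show ?thesis
    by (simp add: abs_mult mult_left_mono mult.assoc)
qed

text \<open>At \<rho> = (k + t) / sqrt 2 the phase ln (1 + \<rho>^2) - (\<rho> - k p)^2 / (k c) of X equals
  ln (1 + k^2 / 2) - k / 6 + critical_phase k t (lemma critical_phase_split), provided
  k^2 + 2 = 3 k, i.e. \<rho> = k / sqrt 2 is a critical point of the phase. The solutions k = 1 and
  k = 2 are the two cases of the theorem.\<close>

definition critical_phase :: "real \<Rightarrow> real \<Rightarrow> real" where
  "critical_phase k t = ln (1 + (2 * t / 3 + t\<^sup>2 / (3 * k))) - (2 * t / 3 + t\<^sup>2 / (3 * k)) - t\<^sup>2 / (3 * k)"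

lemma critical_point_cases:
  fixes k :: real
  assumes "k\<^sup>2 + 2 = 3 * k"
  shows "k = 1 \<or> k = 2"
proof -
  have "(k - 1) * (k - 2) = 0"
    using assms by (simp add: algebra_simps power2_eq_square)
  then show ?thesis
    by simp
qed

lemma critical_phase_arg_gt:
  fixes k t :: real
  assumes k: "k\<^sup>2 + 2 = 3 * k"
  shows "-1 < 2 * t / 3 + t\<^sup>2 / (3 * k)"
proof -
  have "0 < k"
    using critical_point_cases[OF k] by auto
  then have "3 * k * (1 + (2 * t / 3 + t\<^sup>2 / (3 * k))) = 3 * k + 2 * k * t + t\<^sup>2"
    by (simp add: field_simps)
  also have "\<dots> = (k + t)\<^sup>2 + 2"
    using k by (simp add: power2_eq_square algebra_simps)
  finally have "3 * k * (1 + (2 * t / 3 + t\<^sup>2 / (3 * k))) = (k + t)\<^sup>2 + 2" .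
  moreover have "0 < (k + t)\<^sup>2 + 2"
    by (simp add: add_nonneg_pos)
  ultimately have "0 < 3 * k * (1 + (2 * t / 3 + t\<^sup>2 / (3 * k)))"
    by simp
  then have "0 < 1 + (2 * t / 3 + t\<^sup>2 / (3 * k))"
    using \<open>0 < k\<close> by (simp add: zero_less_mult_iff)
  then show ?thesis
    by linarith
qed

lemma critical_phase_split:
  fixes k t :: real
  assumes k: "k\<^sup>2 + 2 = 3 * k"
  shows "ln (1 + (k + t)\<^sup>2 / 2) - (k + t - sqrt 2 * (k * p_const))\<^sup>2 / (2 * (k * c_const))
           = ln (1 + k\<^sup>2 / 2) - k / 6 + critical_phase k t"
proof -
  define u where "u = 2 * t / 3 + t\<^sup>2 / (3 * k)"
  have k0: "0 < k"
    using critical_point_cases[OF k] by auto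
  have u: "0 < 1 + u"
    using critical_phase_arg_gt[OF k, of t] by (simp add: u_def)
  have "1 + (k + t)\<^sup>2 / 2 = (1 + k\<^sup>2 / 2) + k * t + t\<^sup>2 / 2"
    by (simp add: power2_eq_square field_simps)
  also have "\<dots> = 3 * k / 2 + k * t + t\<^sup>2 / 2"
    using k by simp
  also have "\<dots> = (1 + k\<^sup>2 / 2) * (1 + u)"
    using k k0 by (simp add: u_def field_simps)
  finally have "1 + (k + t)\<^sup>2 / 2 = (1 + k\<^sup>2 / 2) * (1 + u)" .
  then have "ln (1 + (k + t)\<^sup>2 / 2) = ln (1 + k\<^sup>2 / 2) + ln (1 + u)"
    using u by (simp add: ln_mult_pos add_pos_nonneg)
  moreover have "(k + t - sqrt 2 * (k * p_const))\<^sup>2 / (2 * (k * c_const)) = k / 6 + u + t\<^sup>2 / (3 * k)"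
    using k0 by (simp add: p_const_def c_const_def u_def field_simps power2_eq_square)
  ultimately show ?thesis
    by (simp add: critical_phase_def u_def)
qed

lemma critical_phase_le:
  fixes k t :: real
  assumes k: "k\<^sup>2 + 2 = 3 * k"
  shows "critical_phase k t \<le> - (1 / (3 * k) * t\<^sup>2)"
  using ln_add_one_self_le_self2[OF critical_phase_arg_gt[OF k, of t]]
  by (simp add: critical_phase_def)

lemma critical_remainder_coeff_bound:
  fixes r t :: real
  assumes r: "0 < r" "r \<le> 1" and t: "\<bar>t\<bar> \<le> 1/10"
  shows "\<bar>4 * r / 27 - r\<^sup>2 / 18 + 2 * r\<^sup>2 * t / 27 + r ^ 3 * t\<^sup>2 / 81\<bar> \<le> 1"
proof -
  have r_pow: "r\<^sup>2 \<le> 1" "r ^ 3 \<le> 1"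
    using r by (simp_all add: power_le_one)
  have "t\<^sup>2 \<le> 1/100"
    using power_mono[OF t abs_ge_zero, of 2] by (simp add: power_divide)
  then have "r ^ 3 * t\<^sup>2 \<le> 1/100"
    using mult_mono[OF r_pow(2), of "t\<^sup>2" "1/100"] by simp
  moreover have "\<bar>r\<^sup>2 * t\<bar> \<le> 1/10"
    using mult_mono[OF r_pow(1) t] by (simp add: abs_mult)
  moreover have "0 \<le> r\<^sup>2" "0 \<le> r ^ 3 * t\<^sup>2"
    using r by simp_all
  ultimately show ?thesis
    using r r_pow unfolding abs_le_iff by (intro conjI; linarith)
qed

lemma critical_phase_expansion:
  fixes k t :: real
  assumes k: "1 \<le> k" and t: "\<bar>t\<bar> \<le> 1/10"
  shows "\<bar>critical_phase k t + (2/9 + 1 / (3 * k)) * t\<^sup>2 - (8/81 - 2 / (9 * k)) * t ^ 3\<bar> \<le> 3 * t ^ 4"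
proof -
  define r where "r = 1 / k"
  define u where "u = 2 * t / 3 + r * t\<^sup>2 / 3"
  define Q where "Q = 4 * r / 27 - r\<^sup>2 / 18 + 2 * r\<^sup>2 * t / 27 + r ^ 3 * t\<^sup>2 / 81"
  have r: "0 < r" "r \<le> 1"
    using k by (auto simp: r_def)
  have rt: "\<bar>r * t\<bar> \<le> 1/10"
    using mult_mono[OF r(2) t] r by (simp add: abs_mult)
  have "\<bar>u\<bar> = \<bar>t\<bar> * \<bar>2/3 + r * t / 3\<bar>"
    by (simp add: u_def power2_eq_square algebra_simps flip: abs_mult)
  also have "\<dots> \<le> \<bar>t\<bar> * 1"
    using rt by (intro mult_left_mono) (auto simp: abs_le_iff)
  finally have u_t: "\<bar>u\<bar> \<le> \<bar>t\<bar>"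
    by simp
  have "u ^ 4 \<le> t ^ 4"
    using power_mono[OF u_t abs_ge_zero, of 4] by (simp add: power_even_abs)
  then have ln_rem: "\<bar>ln (1 + u) - (u - u\<^sup>2 / 2 + u ^ 3 / 3)\<bar> \<le> 2 * t ^ 4"
    using abs_ln_one_plus_minus_cubic_le[of u] u_t t by linarith
  have Q: "\<bar>Q\<bar> \<le> 1"
    unfolding Q_def using r t by (rule critical_remainder_coeff_bound)
  have "\<bar>t ^ 4 * Q\<bar> \<le> t ^ 4"
    using mult_left_mono[OF Q, of "t ^ 4"] by (simp add: abs_mult)
  moreover have identity: "critical_phase k t + (2/9 + 1 / (3 * k)) * t\<^sup>2 - (8/81 - 2 / (9 * k)) * t ^ 3
                   = (ln (1 + u) - (u - u\<^sup>2 / 2 + u ^ 3 / 3)) + t ^ 4 * Q"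
    using k by (simp add: critical_phase_def u_def Q_def r_def field_simps power2_eq_square
        power3_eq_cube power4_eq_xxxx)
  ultimately show ?thesis
    unfolding identity using ln_rem abs_triangle_ineq[of "ln (1 + u) - (u - u\<^sup>2 / 2 + u ^ 3 / 3)" "t ^ 4 * Q"] by linarith
qed

lemma critical_laplace_setup:
  fixes k A \<alpha> :: real
  assumes k: "k\<^sup>2 + 2 = 3 * k"
  shows "laplace_setup (\<lambda>t. A * (1 + t / k) powr \<alpha>) (critical_phase k)
           (2/9 + 1 / (3 * k)) (8/81 - 2 / (9 * k)) (A * \<alpha> / k) A 3
           (\<bar>A\<bar> * (\<bar>\<alpha> * (\<alpha> - 1)\<bar> / 2 * 2 powr \<bar>\<alpha> - 2\<bar>) / k\<^sup>2) (1/10) (k / 2) (1 / (3 * k))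
           (\<bar>A\<bar> * exp \<bar>\<alpha>\<bar>) (\<bar>\<alpha>\<bar> / k)"
proof
  have k12: "1 \<le> k" "k \<le> 2"
    using critical_point_cases[OF k] by auto
  show "(\<lambda>t. A * (1 + t / k) powr \<alpha>) \<in> borel_measurable borel" "critical_phase k \<in> borel_measurable borel"
    unfolding critical_phase_def by measurable
  show "0 < 2/9 + 1 / (3 * k)"
    using k12 by (intro add_pos_pos) auto
  show "(0::real) < 1/10" "1/10 \<le> k / 2" "0 < 1 / (3 * k)"
    using k12 by auto
  show "\<bar>critical_phase k t + (2/9 + 1 / (3 * k)) * t\<^sup>2 - (8/81 - 2 / (9 * k)) * t ^ 3\<bar> \<le> 3 * t ^ 4"
    if "\<bar>t\<bar> \<le> 1/10" for t
    using critical_phase_expansion[OF k12(1) that] .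
  show "\<bar>A * (1 + t / k) powr \<alpha> - A - A * \<alpha> / k * t\<bar>
          \<le> \<bar>A\<bar> * (\<bar>\<alpha> * (\<alpha> - 1)\<bar> / 2 * 2 powr \<bar>\<alpha> - 2\<bar>) / k\<^sup>2 * t\<^sup>2" if "\<bar>t\<bar> \<le> 1/10" for t
    using k12 that by (intro scaled_powr_expansion) auto
  have "\<bar>8/81 - 2 / (9 * k)\<bar> \<le> 10/81"
    using k12 by (auto simp: abs_le_iff field_simps)
  then show "\<bar>8/81 - 2 / (9 * k)\<bar> * (1/10) + 3 * (1/10)\<^sup>2 \<le> (2/9 + 1 / (3 * k)) / 2"
    using k12 by (simp add: power2_eq_square field_simps)
  show "critical_phase k t \<le> - (1 / (3 * k) * t\<^sup>2)" for t
    by (rule critical_phase_le[OF k])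
  show "\<bar>A * (1 + t / k) powr \<alpha>\<bar> \<le> \<bar>A\<bar> * exp \<bar>\<alpha>\<bar> * exp (\<bar>\<alpha>\<bar> / k * \<bar>t\<bar>)" if "- (k / 2) \<le> t" for t
    using k12 that by (intro scaled_powr_growth) auto
qed

lemma Xint_critical_eq_laplace_integral:
  fixes k \<alpha> n :: real
  assumes k: "k\<^sup>2 + 2 = 3 * k" and n: "1 \<le> n"
  shows "Xint (k * p_const) (k * c_const) \<alpha> n
           = exp (n * (ln (1 + k\<^sup>2 / 2) - k / 6))
             * laplace_integral (k / 2) (\<lambda>t. (k / sqrt 2) powr \<alpha> / sqrt 2 * (1 + t / k) powr \<alpha>)
                 (critical_phase k) n"
proof (rule Xint_eq_laplace_integral)
  show "integrable lborel (\<lambda>t. indicator {- (k / 2)..} t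
          * ((k / sqrt 2) powr \<alpha> / sqrt 2 * (1 + t / k) powr \<alpha> * exp (n * critical_phase k t)))"
    using n by (intro laplace_setup.integrable_integrand[OF critical_laplace_setup[OF k]]) auto
  show "0 < k"
    using critical_point_cases[OF k] by auto
  show "k / 2 = k - sqrt 2 * (k * p_const)"
    by (simp add: p_const_def)
  show "ln (1 + (k + t)\<^sup>2 / 2) - (k + t - sqrt 2 * (k * p_const))\<^sup>2 / (2 * (k * c_const))
          = ln (1 + k\<^sup>2 / 2) - k / 6 + critical_phase k t" for t
    by (rule critical_phase_split[OF k])
qed

lemma Xint_critical_asymptotics:
  fixes k \<alpha> q C D r s :: real
  assumes k: "k\<^sup>2 + 2 = 3 * k"
    and q: "q = k * p_const" and C: "C = k * c_const"
    and D: "D = (k / sqrt 2) powr \<alpha> / sqrt 2 * sqrt (pi / (2/9 + 1 / (3 * k)))"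
    and r: "r = 1 + k\<^sup>2 / 2" and s: "s = 6 / k"
  shows "(\<lambda>n. Xint q C \<alpha> n / (D * (r powr n / (exp (n / s) * sqrt n))) - 1) \<in> O(\<lambda>n. 1 / n)"
proof -
  define A where "A = (k / sqrt 2) powr \<alpha> / sqrt 2"
  define a where "a = 2/9 + 1 / (3 * k)"
  define \<phi> where "\<phi> = (\<lambda>t. A * (1 + t / k) powr \<alpha>)"
  have "0 < k"
    using critical_point_cases[OF k] by auto
  interpret laplace_setup \<phi> "critical_phase k" a "8/81 - 2 / (9 * k)" "A * \<alpha> / k" A 3
    "\<bar>A\<bar> * (\<bar>\<alpha> * (\<alpha> - 1)\<bar> / 2 * 2 powr \<bar>\<alpha> - 2\<bar>) / k\<^sup>2" "1/10" "k / 2" "1 / (3 * k)"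
    "\<bar>A\<bar> * exp \<bar>\<alpha>\<bar>" "\<bar>\<alpha>\<bar> / k"
    unfolding \<phi>_def a_def by (rule critical_laplace_setup[OF k])
  have "A \<noteq> 0"
    using \<open>0 < k\<close> by (simp add: A_def)
  have denominator: "D * (r powr n / (exp (n / s) * sqrt n)) = exp (n * (ln r - k / 6)) * (A * sqrt (pi / (a * n)))"
    for n
  proof -
    have "r powr n = exp (n * ln r)"
      using r add_pos_nonneg[of 1 "k\<^sup>2 / 2"] by (simp add: powr_def mult.commute)
    moreover have "exp (n * (ln r - k / 6)) = exp (n * ln r) / exp (n * k / 6)"
      by (simp add: right_diff_distrib exp_diff)
    moreover have "sqrt (pi / (a * n)) = sqrt (pi / a) / sqrt n"
      by (simp add: real_sqrt_divide real_sqrt_mult)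
    moreover have "D = A * sqrt (pi / a)"
      by (simp add: D A_def a_def)
    ultimately show ?thesis
      by (simp add: s)
  qed
  have "Xint q C \<alpha> n / (D * (r powr n / (exp (n / s) * sqrt n))) - 1
          = laplace_integral (k / 2) \<phi> (critical_phase k) n / (A * sqrt (pi / (a * n))) - 1"
    if "1 \<le> n" for n
  proof -
    have "Xint q C \<alpha> n = exp (n * (ln r - k / 6)) * laplace_integral (k / 2) \<phi> (critical_phase k) n"
      using Xint_critical_eq_laplace_integral[OF k that] by (simp add: q C r \<phi>_def A_def)
    then show ?thesis
      unfolding denominator by simp
  qed
  then show ?thesis
    using laplace_relative_error[OF \<open>A \<noteq> 0\<close>]
    by (subst landau_o.big.in_cong) (auto intro: eventually_mono[OF eventually_ge_at_top[of 1]])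
qed

theorem lemma6p4:
  fixes \<alpha> :: real
  shows "((\<lambda>n. Xint p_const c_const \<alpha> n /
            (3 * sqrt (pi / 5) / 2 powr (\<alpha> / 2 + 1 / 2) *
             ((3 / 2) powr n / (exp (n / 6) * sqrt n))) - 1)
           \<in> O[at_top](\<lambda>n. 1 / n)) \<and>
         ((\<lambda>n. Xint (2 * p_const) (2 * c_const) \<alpha> n /
            (3 * sqrt (pi / 7) * 2 powr (\<alpha> / 2) *
             (3 powr n / (exp (n / 3) * sqrt n))) - 1)
           \<in> O[at_top](\<lambda>n. 1 / n))"
proof (intro conjI)
  have sqrt2_powr: "sqrt 2 powr \<alpha> = 2 powr (\<alpha> / 2)"
    by (simp add: powr_half_sqrt[symmetric] powr_powr)
  have "pi / (2/9 + 1 / (3 * 1)) = 9 * (pi / 5)"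
    by simp
  then have "sqrt (pi / (2/9 + 1 / (3 * 1))) = 3 * sqrt (pi / 5)"
    using real_sqrt_mult[of 9 "pi / 5"] by (simp only:) simp
  then have "3 * sqrt (pi / 5) / 2 powr (\<alpha> / 2 + 1 / 2)
               = (1 / sqrt 2) powr \<alpha> / sqrt 2 * sqrt (pi / (2/9 + 1 / (3 * 1)))"
    by (simp add: powr_add powr_half_sqrt powr_divide sqrt2_powr)
  then show "(\<lambda>n. Xint p_const c_const \<alpha> n /
               (3 * sqrt (pi / 5) / 2 powr (\<alpha> / 2 + 1 / 2) * ((3 / 2) powr n / (exp (n / 6) * sqrt n))) - 1)
             \<in> O(\<lambda>n. 1 / n)"
    by (intro Xint_critical_asymptotics[where k = 1]) simp_all
  have "pi / (2/9 + 1 / (3 * 2)) = 9 * (2 * (pi / 7))"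
    by simp
  then have "sqrt (pi / (2/9 + 1 / (3 * 2))) = 3 * sqrt 2 * sqrt (pi / 7)"
    using real_sqrt_mult[of 9 "2 * (pi / 7)"] real_sqrt_mult[of 2 "pi / 7"] by (simp only:) simp
  then have "3 * sqrt (pi / 7) * 2 powr (\<alpha> / 2) = (2 / sqrt 2) powr \<alpha> / sqrt 2 * sqrt (pi / (2/9 + 1 / (3 * 2)))"
    by (simp add: sqrt2_powr real_div_sqrt)
  then show "(\<lambda>n. Xint (2 * p_const) (2 * c_const) \<alpha> n /
               (3 * sqrt (pi / 7) * 2 powr (\<alpha> / 2) * (3 powr n / (exp (n / 3) * sqrt n))) - 1)
             \<in> O(\<lambda>n. 1 / n)"
    by (intro Xint_critical_asymptotics[where k = 2]) simp_all
qed

end
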